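(* Let $s\in C$ and let $\hat\kappa$ be a prime broadcast center of $T$ under $s$. Then for every $x\in V(T)\setminus\{\hat\kappa\}$, $$b^s(x,T)=d_{x,\hat\kappa}\cdot\rho+\tilde w^s_{x,\hat\kappa}+b^s(\hat\kappa,\bar T_{\hat\kappa,x}).$$
   Context: $T$ is a finite tree with vertex set $V(T)$, $|V(T)|=n$, and edge set $E(T)$. Each edge $(u,v)$ carries an interval $[w^-_{u,v},w^+_{u,v}]$ of non-negative reals. A scenario $s$ assigns to every edge $(u,v)$ a weight $w^s_{u,v}\in[w^-_{u,v},w^+_{u,v}]$; $C$ is the set of all scenarios. A constant $\rho>0$ is fixed. Broadcast time (postal model): for a subtree $G$ of $T$ and $u\in V(G)$, $b^s(u,G)=0$ if $u$ has no neighbour in $G$; otherwise, if $v_1,\dots,v_h$ are the neighbours of $u$ in $G$ and $G_{v}$ is the component of $G-u$ containing $v$, $b^s(u,G)=\min_{\pi}\max_{1\le k\le h}\big(k\rho+w^s_{u,v_{\pi(k)}}+b^s(v_{\pi(k)},G_{v_{\pi(k)}})\big)$ over permutations $\pi$ of $\{1,\dots,h\}$. $B^s=\{u: b^s(u,T)\le b^s(v,T)\ \forall v\in V(T)\}$. For distinct $x,y$, $T_{x,y}$ is the component of $T-x$ containing $y$, and $\bar T_{x,y}$ is the subtree induced by $V(T)\setminus V(T_{x,y})$. A vertex $\hat\kappa\in B^s$ is a prime broadcast center under $s$ if $b^s(\hat\kappa,\bar T_{\hat\kappa,u})\ge b^s(u,\bar T_{u,\hat\kappa})$ for every neighbour $u$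 of $\hat\kappa$. $P_{x,y}$ is the set of edges of the $x$–$y$ path in $T$, $d_{x,y}=|P_{x,y}|$, and $\tilde w^s_{x,y}=\sum_{(u,v)\in P_{x,y}}w^s_{u,v}$. *)

theory Defs
  imports Complex_Main
begin

text \<open>The tree T is given by a finite vertex set V and a symmetric, irreflexive
adjacency relation E on V.  Subtrees G of T are represented by their vertex sets
(the subgraph of T induced on them).\<close>

definition adj_in :: "('a \<Rightarrow> 'a \<Rightarrow> bool) \<Rightarrow> 'a set \<Rightarrow> 'a \<Rightarrow> 'a \<Rightarrow> bool" where
  "adj_in E A = (\<lambda>a b. a \<in> A \<and> b \<in> A \<and> E a b)"

definition comp :: "('a \<Rightarrow> 'a \<Rightarrow> bool) \<Rightarrow> 'a set \<Rightarrow> 'a \<Rightarrow> 'a set" where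
  "comp E A v = {x. (adj_in E A)\<^sup>*\<^sup>* v x}"

definition is_tree :: "('a \<Rightarrow> 'a \<Rightarrow> bool) \<Rightarrow> 'a set \<Rightarrow> bool" where
  "is_tree E V \<longleftrightarrow> finite V \<and> V \<noteq> {}
     \<and> (\<forall>a b. E a b \<longrightarrow> a \<in> V \<and> b \<in> V \<and> a \<noteq> b \<and> E b a)
     \<and> (\<forall>a\<in>V. \<forall>b\<in>V. (adj_in E V)\<^sup>*\<^sup>* a b)
     \<and> card {{a, b} | a b. E a b} = card V - 1"

text \<open>Broadcast time, computed with a fuel argument n (the recursion on subtrees
strictly decreases the number of vertices, so fuel card S suffices).
Permutations of the neighbours v_1..v_h are bijections sigma from the neighbour
set onto {1..h}; sigma v is the position k at which v is informed.\<close>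
primrec bt :: "('a \<Rightarrow> 'a \<Rightarrow> bool) \<Rightarrow> ('a \<Rightarrow> 'a \<Rightarrow> real) \<Rightarrow> real \<Rightarrow> nat \<Rightarrow> 'a \<Rightarrow> 'a set \<Rightarrow> real" where
  "bt E w \<rho> 0 u S = 0"
| "bt E w \<rho> (Suc n) u S =
     (let N = {v \<in> S. E u v} in
      if N = {} then 0
      else Min {Max ((\<lambda>v. real (\<sigma> v) * \<rho> + w u v + bt E w \<rho> n v (comp E (S - {u}) v)) ` N)
                 | \<sigma>. bij_betw \<sigma> N {1..card N}})"

definition bcast :: "('a \<Rightarrow> 'a \<Rightarrow> bool) \<Rightarrow> ('a \<Rightarrow> 'a \<Rightarrow> real) \<Rightarrow> real \<Rightarrow> 'a \<Rightarrow> 'a set \<Rightarrow> real" where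
  "bcast E w \<rho> u S = bt E w \<rho> (card S) u S"

definition Tsub :: "('a \<Rightarrow> 'a \<Rightarrow> bool) \<Rightarrow> 'a set \<Rightarrow> 'a \<Rightarrow> 'a \<Rightarrow> 'a set" where
  "Tsub E V x y = comp E (V - {x}) y"

definition Tbar :: "('a \<Rightarrow> 'a \<Rightarrow> bool) \<Rightarrow> 'a set \<Rightarrow> 'a \<Rightarrow> 'a \<Rightarrow> 'a set" where
  "Tbar E V x y = V - Tsub E V x y"

definition scenario :: "('a \<Rightarrow> 'a \<Rightarrow> bool) \<Rightarrow> ('a \<Rightarrow> 'a \<Rightarrow> real) \<Rightarrow> ('a \<Rightarrow> 'a \<Rightarrow> real) \<Rightarrow> ('a \<Rightarrow> 'a \<Rightarrow> real) \<Rightarrow> bool" where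
  "scenario E wlo whi w \<longleftrightarrow> (\<forall>a b. E a b \<longrightarrow> wlo a b \<le> w a b \<and> w a b \<le> whi a b \<and> w a b = w b a)"

definition bcenters :: "('a \<Rightarrow> 'a \<Rightarrow> bool) \<Rightarrow> ('a \<Rightarrow> 'a \<Rightarrow> real) \<Rightarrow> real \<Rightarrow> 'a set \<Rightarrow> 'a set" where
  "bcenters E w \<rho> V = {u \<in> V. \<forall>v\<in>V. bcast E w \<rho> u V \<le> bcast E w \<rho> v V}"

definition prime_center :: "('a \<Rightarrow> 'a \<Rightarrow> bool) \<Rightarrow> ('a \<Rightarrow> 'a \<Rightarrow> real) \<Rightarrow> real \<Rightarrow> 'a set \<Rightarrow> 'a \<Rightarrow> bool" where
  "prime_center E w \<rho> V k \<longleftrightarrow> k \<in> bcenters E w \<rho> V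
     \<and> (\<forall>u. E k u \<longrightarrow> bcast E w \<rho> k (Tbar E V k u) \<ge> bcast E w \<rho> u (Tbar E V u k))"

definition is_path :: "('a \<Rightarrow> 'a \<Rightarrow> bool) \<Rightarrow> 'a list \<Rightarrow> 'a \<Rightarrow> 'a \<Rightarrow> bool" where
  "is_path E xs x y \<longleftrightarrow> xs \<noteq> [] \<and> hd xs = x \<and> last xs = y \<and> distinct xs
     \<and> (\<forall>i < length xs - 1. E (xs ! i) (xs ! Suc i))"

definition tpath :: "('a \<Rightarrow> 'a \<Rightarrow> bool) \<Rightarrow> 'a \<Rightarrow> 'a \<Rightarrow> 'a list" where
  "tpath E x y = (THE xs. is_path E xs x y)"

definition tdist :: "('a \<Rightarrow> 'a \<Rightarrow> bool) \<Rightarrow> 'a \<Rightarrow> 'a \<Rightarrow> nat" where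
  "tdist E x y = length (tpath E x y) - 1"

definition pweight :: "('a \<Rightarrow> 'a \<Rightarrow> bool) \<Rightarrow> ('a \<Rightarrow> 'a \<Rightarrow> real) \<Rightarrow> 'a \<Rightarrow> 'a \<Rightarrow> real" where
  "pweight E w x y = (let xs = tpath E x y in
      (\<Sum>i<length xs - 1. w (xs ! i) (xs ! Suc i)))"

end

theory Submission
  imports Defs
begin

text \<open>Let x = y_0, y_1, ..., y_d = \<kappa> be the path from x to the prime center, and let
t(y, v) = w(y,v) + b(v, T_{y,v}) be the time the branch T_{y,v} needs once y calls v.
Going outwards from \<kappa>, the branch towards \<kappa> is the slowest one at every y_i:
b(y_i, T_{y_{i+1},y_i}) \<le> t(y_i, y_{i+1}).  At y_{d-1} this is the defining inequality of a
prime center.  For the step from y_{i+1} to y_i, use that a broadcast is never faster than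
\<rho> plus the time of any single branch it serves:
  b(y_i, T_{y_{i+1},y_i}) \<le> t(y_{i+1}, y_i) \<le> b(y_{i+1}, T_{y_{i+2},y_{i+1}}) - \<rho>
    \<le> t(y_{i+1}, y_{i+2}) - \<rho> \<le> b(y_{i+1}, T_{y_i,y_{i+1}}) - 2\<rho> \<le> t(y_i, y_{i+1}).
Since an optimal call order on a subset of the neighbours is never slower than one on all of
them, every y_i therefore calls y_{i+1} first, b(y_i, .) = \<rho> + t(y_i, y_{i+1}), and unrolling
this along the path gives the formula.\<close>

section \<open>Optimal call orders\<close>

definition sched_time :: "real \<Rightarrow> 'a set \<Rightarrow> ('a \<Rightarrow> real) \<Rightarrow> real" where
  "sched_time \<rho> N g = (if N = {} then 0
     else Min {Max ((\<lambda>v. real (\<sigma> v) * \<rho> + g v) ` N) | \<sigma>. bij_betw \<sigma> N {1..card N}})"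

lemma sched_time_cong:
  "(\<And>v. v \<in> N \<Longrightarrow> g v = g' v) \<Longrightarrow> sched_time \<rho> N g = sched_time \<rho> N g'"
  unfolding sched_time_def by (simp cong: image_cong)

lemma finite_sched_values:
  assumes "finite N"
  shows "finite {Max ((\<lambda>v. real (\<sigma> v) * \<rho> + g v) ` N) | \<sigma>. bij_betw \<sigma> N {1..card N}}"
proof (rule finite_subset)
  show "{Max ((\<lambda>v. real (\<sigma> v) * \<rho> + g v) ` N) | \<sigma>. bij_betw \<sigma> N {1..card N}}
      \<subseteq> insert (Max {}) ((\<lambda>(i, v). real i * \<rho> + g v) ` ({1..card N} \<times> N))"
  proof
    fix t assume "t \<in> {Max ((\<lambda>v. real (\<sigma> v) * \<rho> + g v) ` N) | \<sigma>. bij_betw \<sigma> N {1..card N}}"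
    then obtain \<sigma> where t: "t = Max ((\<lambda>v. real (\<sigma> v) * \<rho> + g v) ` N)"
      and \<sigma>: "bij_betw \<sigma> N {1..card N}" by blast
    show "t \<in> insert (Max {}) ((\<lambda>(i, v). real i * \<rho> + g v) ` ({1..card N} \<times> N))"
    proof (cases "N = {}")
      case False
      then have "t \<in> (\<lambda>v. real (\<sigma> v) * \<rho> + g v) ` N"
        unfolding t using assms by (intro Max_in) auto
      then show ?thesis using bij_betwE[OF \<sigma>] by force
    qed (simp add: t)
  qed
qed (use assms in simp)

lemma sched_time_attained:
  assumes "finite N" "N \<noteq> {}"
  obtains \<sigma> where "bij_betw \<sigma> N {1..card N}"
    and "sched_time \<rho> N g = Max ((\<lambda>v. real (\<sigma> v) * \<rho> + g v) ` N)"
proof -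
  let ?X = "{Max ((\<lambda>v. real (\<sigma> v) * \<rho> + g v) ` N) | \<sigma>. bij_betw \<sigma> N {1..card N}}"
  obtain \<sigma>0 where "bij_betw \<sigma>0 N {1..card N}"
    using finite_same_card_bij[of N "{1..card N}"] assms(1) by auto
  then have "?X \<noteq> {}" by blast
  then have "Min ?X \<in> ?X" using finite_sched_values[OF assms(1)] by (intro Min_in)
  then show ?thesis using that assms(2) unfolding sched_time_def by auto
qed

lemma inj_on_card_imp_bij_betw:
  assumes "finite A" "inj_on f A" "f ` A \<subseteq> {1..card A}"
  shows "bij_betw f A {1..card A}"
proof -
  have "card (f ` A) = card {1..card A}" using assms(2) card_image by auto
  then have "f ` A = {1..card A}" using card_subset_eq[of "{1..card A}" "f ` A"] assms(3) by auto
  then show ?thesis unfolding bij_betw_def using assms(2) by blast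
qed

text \<open>Ranking the slots compresses an injective assignment into a permutation without
delaying anyone.\<close>

lemma sched_time_le_inj:
  assumes "finite N" "N \<noteq> {}" "inj_on \<sigma> N" "\<And>v. v \<in> N \<Longrightarrow> \<sigma> v \<ge> 1" "\<rho> \<ge> 0"
  shows "sched_time \<rho> N g \<le> Max ((\<lambda>v. real (\<sigma> v) * \<rho> + g v) ` N)"
proof -
  define \<tau> where "\<tau> v = card {u \<in> N. \<sigma> u \<le> \<sigma> v}" for v
  have \<tau>_le: "\<tau> v \<le> \<sigma> v" if "v \<in> N" for v
  proof -
    have "\<tau> v \<le> card {1..\<sigma> v}"
      unfolding \<tau>_def using assms(3,4) by (intro card_inj_on_le[of \<sigma>]) (auto intro: inj_on_subset)
    then show ?thesis by simp
  qed
  have \<tau>_mono: "\<tau> u < \<tau> v" if "u \<in> N" "v \<in> N" "\<sigma> u < \<sigma> v" for u v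
  proof -
    have "{w \<in> N. \<sigma> w \<le> \<sigma> u} \<subset> {w \<in> N. \<sigma> w \<le> \<sigma> v}"
    proof
      show "{w \<in> N. \<sigma> w \<le> \<sigma> u} \<subseteq> {w \<in> N. \<sigma> w \<le> \<sigma> v}" using that by auto
      have "v \<in> {w \<in> N. \<sigma> w \<le> \<sigma> v} - {w \<in> N. \<sigma> w \<le> \<sigma> u}" using that by auto
      then show "{w \<in> N. \<sigma> w \<le> \<sigma> u} \<noteq> {w \<in> N. \<sigma> w \<le> \<sigma> v}" by blast
    qed
    then show ?thesis unfolding \<tau>_def using assms(1) by (simp add: psubset_card_mono)
  qed
  have "bij_betw \<tau> N {1..card N}"
  proof (rule inj_on_card_imp_bij_betw[OF assms(1)])
    show "inj_on \<tau> N"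
    proof (rule inj_onI)
      fix u v assume "u \<in> N" "v \<in> N" "\<tau> u = \<tau> v"
      then have "\<sigma> u = \<sigma> v" using \<tau>_mono by (metis less_irrefl linorder_neqE_nat)
      then show "u = v" using assms(3) \<open>u \<in> N\<close> \<open>v \<in> N\<close> by (meson inj_onD)
    qed
    show "\<tau> ` N \<subseteq> {1..card N}"
      unfolding \<tau>_def using assms(1) by (auto intro!: card_mono Suc_leI card_gt_0_iff[THEN iffD2])
  qed
  then have "sched_time \<rho> N g \<le> Max ((\<lambda>v. real (\<tau> v) * \<rho> + g v) ` N)"
    unfolding sched_time_def using assms(2) finite_sched_values[OF assms(1)] by (auto intro!: Min_le)
  also have "\<dots> \<le> Max ((\<lambda>v. real (\<sigma> v) * \<rho> + g v) ` N)"
  proof (rule Max.boundedI)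
    fix t assume "t \<in> (\<lambda>v. real (\<tau> v) * \<rho> + g v) ` N"
    then obtain v where v: "v \<in> N" "t = real (\<tau> v) * \<rho> + g v" by blast
    then have "t \<le> real (\<sigma> v) * \<rho> + g v" using \<tau>_le assms(5) by (simp add: mult_right_mono)
    also have "\<dots> \<le> Max ((\<lambda>v. real (\<sigma> v) * \<rho> + g v) ` N)" using v(1) assms(1) by (intro Max_ge) auto
    finally show "t \<le> Max ((\<lambda>v. real (\<sigma> v) * \<rho> + g v) ` N)" .
  qed (use assms in auto)
  finally show ?thesis .
qed

lemma sched_time_ge:
  assumes "finite N" "v \<in> N" "\<rho> \<ge> 0"
  shows "\<rho> + g v \<le> sched_time \<rho> N g"
proof -
  obtain \<sigma> where \<sigma>: "bij_betw \<sigma> N {1..card N}"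
    and opt: "sched_time \<rho> N g = Max ((\<lambda>v. real (\<sigma> v) * \<rho> + g v) ` N)"
    using sched_time_attained[OF assms(1)] assms(2) by blast
  have "\<rho> \<le> real (\<sigma> v) * \<rho>" using bij_betwE[OF \<sigma>] assms(2,3) by (auto intro: mult_le_cancel_right1[THEN iffD2])
  also have "real (\<sigma> v) * \<rho> + g v \<le> Max ((\<lambda>v. real (\<sigma> v) * \<rho> + g v) ` N)"
    using assms by (intro Max_ge) auto
  finally show ?thesis using opt by linarith
qed

lemma sched_time_nonneg:
  assumes "finite N" "\<rho> \<ge> 0" "\<And>v. v \<in> N \<Longrightarrow> g v \<ge> 0"
  shows "sched_time \<rho> N g \<ge> 0"
proof (cases "N = {}")
  case False
  then obtain v where "v \<in> N" by blast
  then show ?thesis using sched_time_ge[OF assms(1) _ assms(2), of v g] assms(2,3) by force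
qed (simp add: sched_time_def)

lemma sched_time_mono:
  assumes "finite N2" "N1 \<subseteq> N2" "\<rho> \<ge> 0" "\<And>v. v \<in> N2 \<Longrightarrow> g v \<ge> 0"
  shows "sched_time \<rho> N1 g \<le> sched_time \<rho> N2 g"
proof (cases "N1 = {}")
  case True
  then show ?thesis using sched_time_nonneg[OF assms(1,3,4)] by (simp add: sched_time_def)
next
  case False
  then obtain \<sigma> where \<sigma>: "bij_betw \<sigma> N2 {1..card N2}"
    and opt: "sched_time \<rho> N2 g = Max ((\<lambda>v. real (\<sigma> v) * \<rho> + g v) ` N2)"
    using sched_time_attained[OF assms(1)] assms(2) by blast
  have fin1: "finite N1" using assms(1,2) by (rule finite_subset[rotated])
  have "sched_time \<rho> N1 g \<le> Max ((\<lambda>v. real (\<sigma> v) * \<rho> + g v) ` N1)"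
    using False assms(2,3) bij_betwE[OF \<sigma>] bij_betw_imp_inj_on[OF \<sigma>]
    by (intro sched_time_le_inj[OF fin1]) (auto intro: inj_on_subset)
  also have "\<dots> \<le> Max ((\<lambda>v. real (\<sigma> v) * \<rho> + g v) ` N2)"
    using False assms(1,2) by (intro Max_mono) auto
  finally show ?thesis using opt by simp
qed

lemma sched_time_insert_dominant:
  assumes "finite N" "a \<notin> N" "\<rho> \<ge> 0" "sched_time \<rho> N g \<le> g a"
  shows "sched_time \<rho> (insert a N) g = \<rho> + g a"
proof (rule antisym)
  obtain \<sigma> where \<sigma>: "inj_on \<sigma> N" "\<And>v. v \<in> N \<Longrightarrow> 1 \<le> \<sigma> v \<and> real (\<sigma> v) * \<rho> + g v \<le> g a"
  proof (cases "N = {}")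
    case False
    then obtain \<sigma> where b: "bij_betw \<sigma> N {1..card N}"
      and opt: "sched_time \<rho> N g = Max ((\<lambda>v. real (\<sigma> v) * \<rho> + g v) ` N)"
      using sched_time_attained[OF assms(1)] by blast
    have "real (\<sigma> v) * \<rho> + g v \<le> g a" if "v \<in> N" for v
    proof -
      have "real (\<sigma> v) * \<rho> + g v \<le> sched_time \<rho> N g"
        unfolding opt using that assms(1) by (intro Max_ge) auto
      then show ?thesis using assms(4) by linarith
    qed
    then show ?thesis using that bij_betw_imp_inj_on[OF b] bij_betwE[OF b] by fastforce
  qed simp
  define \<tau> where "\<tau> v = (if v = a then 1 else Suc (\<sigma> v))" for v
  have "\<sigma> v > 0" if "v \<in> N" for v using \<sigma>(2)[OF that] by simp
  then have inj: "inj_on \<tau> (insert a N)"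
    using \<sigma>(1) assms(2) unfolding \<tau>_def by (auto simp: inj_on_def)
  have "sched_time \<rho> (insert a N) g \<le> Max ((\<lambda>v. real (\<tau> v) * \<rho> + g v) ` insert a N)"
    by (rule sched_time_le_inj[OF _ _ inj]) (use assms(1,3) in \<open>auto simp: \<tau>_def\<close>)
  also have "\<dots> \<le> \<rho> + g a"
    using assms(1,2) \<sigma>(2) by (auto simp: \<tau>_def algebra_simps)
  finally show "sched_time \<rho> (insert a N) g \<le> \<rho> + g a" .
qed (use assms in \<open>auto intro: sched_time_ge\<close>)

section \<open>Components and the broadcast recursion\<close>

lemma comp_subset: "comp E A v \<subseteq> insert v A"
proof
  fix x assume "x \<in> comp E A v"
  then have "(adj_in E A)\<^sup>*\<^sup>* v x" by (simp add: comp_def)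
  then show "x \<in> insert v A" by (induction rule: rtranclp_induct) (auto simp: adj_in_def)
qed

lemma comp_self: "v \<in> comp E A v"
  by (simp add: comp_def)

lemma symp_adj_in: "symp E \<Longrightarrow> symp (adj_in E A)"
  by (auto simp: symp_def adj_in_def)

lemma adj_in_rtranclp_sym: "symp E \<Longrightarrow> (adj_in E A)\<^sup>*\<^sup>* x y \<Longrightarrow> (adj_in E A)\<^sup>*\<^sup>* y x"
  by (rule sympD[OF symp_rtranclp[OF symp_adj_in]])

lemma comp_mono: "A \<subseteq> B \<Longrightarrow> comp E A v \<subseteq> comp E B v"
  unfolding comp_def adj_in_def
  by (auto elim!: rtranclp_mono[THEN predicate2D, rotated])

lemma comp_eq_if_mem:
  assumes "symp E" "z \<in> comp E A v"
  shows "comp E A z = comp E A v"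
proof -
  have "(adj_in E A)\<^sup>*\<^sup>* v z" "(adj_in E A)\<^sup>*\<^sup>* z v"
    using assms adj_in_rtranclp_sym by (auto simp: comp_def)
  then show ?thesis unfolding comp_def by (auto intro: rtranclp_trans)
qed

lemma comp_restrict:
  assumes "comp E A c \<subseteq> B" "B \<subseteq> A"
  shows "comp E B c = comp E A c"
proof
  show "comp E B c \<subseteq> comp E A c" using assms(2) by (rule comp_mono)
  show "comp E A c \<subseteq> comp E B c"
  proof
    fix z assume "z \<in> comp E A c"
    then have "(adj_in E A)\<^sup>*\<^sup>* c z" by (simp add: comp_def)
    then have "(adj_in E B)\<^sup>*\<^sup>* c z"
    proof (induction rule: rtranclp_induct)
      case (step y z)
      then have "y \<in> comp E A c" "z \<in> comp E A c"
        by (auto simp: comp_def intro: rtranclp.rtrancl_into_rtrancl)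
      then have "adj_in E B y z" using step.hyps(2) assms(1) by (auto simp: adj_in_def)
      then show ?case using step.IH by (rule rtranclp.rtrancl_into_rtrancl[rotated])
    qed simp
    then show "z \<in> comp E B c" by (simp add: comp_def)
  qed
qed

lemma card_comp_less:
  assumes "finite S" "u \<in> S" "v \<in> S - {u}"
  shows "finite (comp E (S - {u}) v)" "card (comp E (S - {u}) v) < card S"
proof -
  have sub: "comp E (S - {u}) v \<subseteq> S - {u}" using comp_subset[of E "S - {u}" v] assms(3) by auto
  then show "finite (comp E (S - {u}) v)" using assms(1) finite_subset by blast
  have "card (comp E (S - {u}) v) \<le> card (S - {u})" using sub assms(1) by (intro card_mono) auto
  also have "\<dots> < card S" using assms(1,2) by (rule card_Diff1_less)
  finally show "card (comp E (S - {u}) v) < card S" .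
qed

lemma bt_Suc:
  "bt E w \<rho> (Suc n) u S =
     sched_time \<rho> {v\<in>S. E u v} (\<lambda>v. w u v + bt E w \<rho> n v (comp E (S - {u}) v))"
  by (simp only: bt.simps Let_def sched_time_def add.assoc)

text \<open>Irreflexivity makes every recursive call of bt act on a strictly smaller vertex set.\<close>

lemma bt_fuel_indep:
  assumes irr: "\<And>a. \<not> E a a"
  shows "finite S \<Longrightarrow> u \<in> S \<Longrightarrow> card S \<le> n \<Longrightarrow> card S \<le> m \<Longrightarrow> bt E w \<rho> n u S = bt E w \<rho> m u S"
proof (induction n arbitrary: m u S)
  case 0
  then show ?case by (simp add: card_gt_0_iff)
next
  case (Suc n)
  then obtain m' where m: "m = Suc m'" by (cases m) (auto simp: card_gt_0_iff)
  have "bt E w \<rho> n v (comp E (S - {u}) v) = bt E w \<rho> m' v (comp E (S - {u}) v)"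
    if "v \<in> {v\<in>S. E u v}" for v
  proof -
    have v: "v \<in> S - {u}" using that irr by auto
    show ?thesis
      using card_comp_less[where E=E, OF Suc.prems(1,2) v] Suc.prems(3,4) m
      by (intro Suc.IH comp_self) auto
  qed
  then show ?case unfolding m bt_Suc by (intro sched_time_cong) simp
qed

lemma bcast_unfold:
  assumes irr: "\<And>a. \<not> E a a" and S: "finite S" "u \<in> S"
  shows "bcast E w \<rho> u S = sched_time \<rho> {v\<in>S. E u v} (\<lambda>v. w u v + bcast E w \<rho> v (comp E (S - {u}) v))"
proof -
  obtain n where n: "card S = Suc n" using S by (cases "card S") (auto simp: card_gt_0_iff)
  have "bt E w \<rho> n v (comp E (S - {u}) v) = bcast E w \<rho> v (comp E (S - {u}) v)"
    if "v \<in> {v\<in>S. E u v}" for v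
  proof -
    have v: "v \<in> S - {u}" using that irr by auto
    show ?thesis
      unfolding bcast_def using card_comp_less[where E=E, OF S v] n
      by (intro bt_fuel_indep[OF irr] comp_self) auto
  qed
  then show ?thesis unfolding bcast_def n bt_Suc by (intro sched_time_cong) simp
qed

lemma bcast_nonneg:
  assumes "\<And>a b. E a b \<Longrightarrow> w a b \<ge> 0" "\<rho> \<ge> 0" "finite S"
  shows "bcast E w \<rho> u S \<ge> 0"
proof -
  have "bt E w \<rho> n u S \<ge> 0" for n
    using assms(3)
  proof (induction n arbitrary: u S)
    case (Suc n)
    have "finite (comp E (S - {u}) v)" for v
      using comp_subset[of E "S - {u}" v] Suc.prems finite_subset by blast
    then show ?case
      unfolding bt_Suc using Suc assms(1,2) by (intro sched_time_nonneg) (auto intro: add_nonneg_nonneg)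
  qed simp
  then show ?thesis unfolding bcast_def .
qed

section \<open>Connected graphs and paths\<close>

text \<open>Every vertex other than a root r has an edge to a parent closer to r, and these
edges are distinct.\<close>

lemma card_edges_ge_connected:
  assumes fin: "finite V" and ne: "V \<noteq> {}"
    and edges: "\<And>a b. E a b \<Longrightarrow> a \<in> V \<and> b \<in> V \<and> a \<noteq> b"
    and conn: "\<And>a b. a \<in> V \<Longrightarrow> b \<in> V \<Longrightarrow> (adj_in E V)\<^sup>*\<^sup>* a b"
  shows "card V - 1 \<le> card {{a, b} | a b. E a b}"
proof -
  obtain r where r: "r \<in> V" using ne by blast
  define R where "R = adj_in E V"
  define d where "d z = (LEAST n. (R ^^ n) r z)" for z
  have dz: "(R ^^ d z) r z" if "z \<in> V" for z
  proof -
    have "\<exists>n. (R ^^ n) r z" using conn r that rtranclp_imp_relpowp unfolding R_def by metis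
    then show ?thesis unfolding d_def by (rule LeastI_ex)
  qed
  have par: "\<exists>y. R y z \<and> d y < d z" if "z \<in> V" "z \<noteq> r" for z
  proof -
    have "d z \<noteq> 0" using dz[OF that(1)] that(2) by (metis relpowp_0_E)
    then obtain k where k: "d z = Suc k" using not0_implies_Suc by blast
    then have "(R ^^ Suc k) r z" using dz[OF that(1)] by simp
    then obtain y where y: "(R ^^ k) r y" "R y z" by (rule relpowp_Suc_E)
    have "d y \<le> k" unfolding d_def using y(1) by (rule Least_le)
    then show ?thesis using y k by auto
  qed
  define parent where "parent z = (SOME y. R y z \<and> d y < d z)" for z
  have parent: "R (parent z) z \<and> d (parent z) < d z" if "z \<in> V" "z \<noteq> r" for z
    unfolding parent_def using par[OF that] by (rule someI_ex)
  define f where "f z = {z, parent z}" for z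
  have inj: "inj_on f (V - {r})"
  proof (rule inj_onI)
    fix z1 z2 assume z: "z1 \<in> V - {r}" "z2 \<in> V - {r}" "f z1 = f z2"
    show "z1 = z2"
    proof (rule ccontr)
      assume ne: "z1 \<noteq> z2"
      have "{z1, parent z1} = {z2, parent z2}" using z f_def by simp
      then have "z1 = parent z2 \<and> parent z1 = z2" using ne by (auto simp: doubleton_eq_iff)
      then show False using parent[of z1] parent[of z2] z by auto
    qed
  qed
  have img: "f ` (V - {r}) \<subseteq> {{a, b} | a b. E a b}"
  proof
    fix t assume "t \<in> f ` (V - {r})"
    then obtain z where z: "z \<in> V - {r}" "t = f z" by blast
    then have "E (parent z) z" using parent[of z] unfolding R_def adj_in_def by auto
    moreover have "t = {parent z, z}" using z f_def by auto
    ultimately show "t \<in> {{a, b} | a b. E a b}" by blast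
  qed
  have "{{a, b} | a b. E a b} \<subseteq> Pow V" using edges by auto
  then have finE: "finite {{a, b} | a b. E a b}" using fin finite_subset by blast
  have "card (V - {r}) \<le> card {{a, b} | a b. E a b}"
    using card_inj_on_le[OF inj img finE] .
  then show ?thesis using r fin by simp
qed

definition remove_edge :: "('a \<Rightarrow> 'a \<Rightarrow> bool) \<Rightarrow> 'a \<Rightarrow> 'a \<Rightarrow> 'a \<Rightarrow> 'a \<Rightarrow> bool" where
  "remove_edge E a b x y \<longleftrightarrow> E x y \<and> {x, y} \<noteq> {a, b}"

lemma symp_remove_edge: "symp E \<Longrightarrow> symp (remove_edge E a b)"
  by (auto simp: symp_def remove_edge_def insert_commute)

lemma remove_edge_commute: "remove_edge E a b = remove_edge E b a"
  by (auto simp: remove_edge_def insert_commute fun_eq_iff)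

lemma walk_remove_edge:
  assumes "(adj_in E A)\<^sup>*\<^sup>* x y" "A \<subseteq> V" "a \<notin> A"
  shows "(adj_in (remove_edge E a b) V)\<^sup>*\<^sup>* x y"
  using assms(1)
  by (rule rtranclp_mono[THEN predicate2D, rotated])
    (use assms(2,3) in \<open>auto simp: adj_in_def remove_edge_def doubleton_eq_iff\<close>)

lemma is_path_singleton: "is_path E [a] p q \<longleftrightarrow> p = a \<and> q = a"
  by (auto simp: is_path_def)

lemma is_path_Cons_Cons:
  "is_path E (a # b # xs) p q \<longleftrightarrow> a = p \<and> E a b \<and> a \<notin> set (b # xs) \<and> is_path E (b # xs) b q"
proof -
  have "(\<forall>i < Suc (length xs). E ((a # b # xs) ! i) ((a # b # xs) ! Suc i))
     \<longleftrightarrow> E a b \<and> (\<forall>i < length xs. E ((b # xs) ! i) ((b # xs) ! Suc i))"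
    by (auto simp: less_Suc_eq_0_disj)
  then show ?thesis unfolding is_path_def by auto
qed

lemma is_path_loop: "is_path E xs p p \<Longrightarrow> xs = [p]"
  by (cases xs rule: rev_cases) (auto simp: is_path_def hd_append split: if_splits intro: hd_in_set)

lemma is_path_drop:
  assumes "is_path E xs p q" "k < length xs"
  shows "is_path E (drop k xs) (xs ! k) q"
  using assms unfolding is_path_def
  by (auto simp: hd_drop_conv_nth last_drop nth_drop)

lemma is_path_set_subset:
  assumes "is_path E xs p q" "p \<in> V" "\<And>a b. E a b \<Longrightarrow> b \<in> V"
  shows "set xs \<subseteq> V"
proof
  fix z assume "z \<in> set xs"
  then obtain i where i: "i < length xs" "xs ! i = z" by (auto simp: in_set_conv_nth)
  show "z \<in> V"
  proof (cases i)
    case 0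
    then show ?thesis using i assms(1,2) by (auto simp: is_path_def hd_conv_nth)
  next
    case (Suc j)
    then have "E (xs ! j) (xs ! i)" using i assms(1) by (auto simp: is_path_def)
    then show ?thesis using i assms(3) by blast
  qed
qed

lemma walk_of_path:
  "is_path E xs p q \<Longrightarrow> set xs \<subseteq> A \<Longrightarrow> (adj_in E A)\<^sup>*\<^sup>* p q"
proof (induction xs arbitrary: p rule: induct_list012)
  case (3 a b xs)
  then have "adj_in E A p b" "(adj_in E A)\<^sup>*\<^sup>* b q"
    by (auto simp: is_path_Cons_Cons adj_in_def)
  then show ?case by (rule converse_rtranclp_into_rtranclp)
qed (auto simp: is_path_def)

lemma path_of_walk:
  assumes "(adj_in E V)\<^sup>*\<^sup>* p q"
  shows "\<exists>xs. is_path E xs p q"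
  using assms
proof (induction rule: converse_rtranclp_induct)
  case base
  have "is_path E [q] q q" by (simp add: is_path_singleton)
  then show ?case by blast
next
  case (step p y)
  then obtain ys where ys: "is_path E ys y q" by blast
  show ?case
  proof (cases "p \<in> set ys")
    case True
    then obtain k where "k < length ys" "ys ! k = p" by (auto simp: in_set_conv_nth)
    then show ?thesis using is_path_drop[OF ys] by metis
  next
    case False
    obtain ys' where "ys = y # ys'" using ys by (cases ys) (auto simp: is_path_def)
    then have "is_path E (p # ys) p q" using ys False step.hyps(1)
      by (auto simp: is_path_Cons_Cons adj_in_def)
    then show ?thesis by blast
  qed
qed

definition list_weight :: "('a \<Rightarrow> 'a \<Rightarrow> real) \<Rightarrow> 'a list \<Rightarrow> real" where
  "list_weight w xs = (\<Sum>i<length xs - 1. w (xs ! i) (xs ! Suc i))"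

lemma list_weight_Cons_Cons: "list_weight w (a # b # xs) = w a b + list_weight w (b # xs)"
  unfolding list_weight_def by (simp add: sum.lessThan_Suc_shift del: sum.lessThan_Suc)

lemma list_weight_pair: "list_weight w [a, b] = w a b"
  by (simp add: list_weight_def)

lemma pweight_eq_list_weight: "pweight E w x y = list_weight w (tpath E x y)"
  by (simp add: pweight_def list_weight_def Let_def)

section \<open>Branches of a tree\<close>

locale tree_graph =
  fixes E :: "'a \<Rightarrow> 'a \<Rightarrow> bool" and V :: "'a set"
  assumes tree: "is_tree E V"
begin

lemma finite_V: "finite V"
  and V_nonempty: "V \<noteq> {}"
  and edge_in_V: "E a b \<Longrightarrow> a \<in> V \<and> b \<in> V"
  and edge_irrefl: "\<not> E a a"
  and symp_E: "symp E"
  and connected: "a \<in> V \<Longrightarrow> b \<in> V \<Longrightarrow> (adj_in E V)\<^sup>*\<^sup>* a b"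
  using tree unfolding is_tree_def symp_def by auto

lemma edge_sym: "E a b \<Longrightarrow> E b a"
  using symp_E by (rule sympD)

lemma edge_is_bridge:
  assumes ab: "E a b"
  shows "\<not> (adj_in (remove_edge E a b) V)\<^sup>*\<^sup>* a b"
proof
  let ?E' = "remove_edge E a b"
  assume walk_ab: "(adj_in ?E' V)\<^sup>*\<^sup>* a b"
  have walk_ba: "(adj_in ?E' V)\<^sup>*\<^sup>* b a"
    using adj_in_rtranclp_sym[OF symp_remove_edge[OF symp_E] walk_ab] .
  have connected': "(adj_in ?E' V)\<^sup>*\<^sup>* p q" if "p \<in> V" "q \<in> V" for p q
    using connected[OF that]
  proof (induction rule: rtranclp_induct)
    case (step y z)
    show ?case
    proof (cases "{y, z} = {a, b}")
      case True
      then have "(adj_in ?E' V)\<^sup>*\<^sup>* y z" using walk_ab walk_ba by (auto simp: doubleton_eq_iff)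
      then show ?thesis using step.IH by (rule rtranclp_trans[rotated])
    next
      case False
      then have "adj_in ?E' V y z" using step.hyps(2) by (auto simp: adj_in_def remove_edge_def)
      then show ?thesis using step.IH by (rule rtranclp.rtrancl_into_rtrancl[rotated])
    qed
  qed simp
  have "?E' x y \<Longrightarrow> x \<in> V \<and> y \<in> V \<and> x \<noteq> y" for x y
    using edge_in_V edge_irrefl by (auto simp: remove_edge_def)
  then have "card V - 1 \<le> card {{x, y} | x y. ?E' x y}"
    using card_edges_ge_connected[OF finite_V V_nonempty _ connected'] by blast
  moreover have "{{x, y} | x y. ?E' x y} = {{x, y} | x y. E x y} - {{a, b}}"
    unfolding remove_edge_def by blast
  moreover have "{a, b} \<in> {{x, y} | x y. E x y}" using ab by blast
  moreover have "card {a, b} \<le> card V" using edge_in_V[OF ab] finite_V by (intro card_mono) auto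
  ultimately show False using tree ab edge_irrefl[of a] unfolding is_tree_def by auto
qed

lemma Tsub_self: "c \<in> Tsub E V x c"
  unfolding Tsub_def by (rule comp_self)

lemma Tsub_subset: "E x c \<Longrightarrow> Tsub E V x c \<subseteq> V - {x}"
  using comp_subset[of E "V - {x}" c] edge_in_V[of x c] edge_irrefl[of x]
  unfolding Tsub_def by auto

lemma Tsub_closed:
  assumes "y \<in> Tsub E V x c" "E y z" "z \<noteq> x" "c \<noteq> x"
  shows "z \<in> Tsub E V x c"
proof -
  have "y \<noteq> x" using assms(1,4) comp_subset[of E "V - {x}" c] unfolding Tsub_def by auto
  then have "adj_in E (V - {x}) y z" using assms(2,3) edge_in_V[OF assms(2)] by (auto simp: adj_in_def)
  then show ?thesis using assms(1) unfolding Tsub_def comp_def by (auto intro: rtranclp.rtrancl_into_rtrancl)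
qed

lemma Tsub_eq_if_mem: "z \<in> Tsub E V x c \<Longrightarrow> Tsub E V x z = Tsub E V x c"
  unfolding Tsub_def by (rule comp_eq_if_mem[OF symp_E])

lemma walk_remove_edge_in_Tsub:
  "z \<in> Tsub E V x c \<Longrightarrow> (adj_in (remove_edge E x u) V)\<^sup>*\<^sup>* c z"
  unfolding Tsub_def comp_def by (auto elim: walk_remove_edge)

lemma neighbour_notin_Tsub:
  assumes "E b a" "E b c" "a \<noteq> c"
  shows "a \<notin> Tsub E V b c"
proof
  assume "a \<in> Tsub E V b c"
  then have "(adj_in (remove_edge E b a) V)\<^sup>*\<^sup>* c a" by (rule walk_remove_edge_in_Tsub)
  moreover have "adj_in (remove_edge E b a) V b c"
    using assms edge_in_V by (auto simp: adj_in_def remove_edge_def doubleton_eq_iff)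
  ultimately have "(adj_in (remove_edge E b a) V)\<^sup>*\<^sup>* b a" by (rule converse_rtranclp_into_rtranclp[rotated])
  then show False using edge_is_bridge[OF assms(1)] by blast
qed

lemma Tsub_disjoint:
  assumes "E a b"
  shows "Tsub E V a b \<inter> Tsub E V b a = {}"
proof (rule ccontr)
  assume "Tsub E V a b \<inter> Tsub E V b a \<noteq> {}"
  then obtain z where "z \<in> Tsub E V a b" "z \<in> Tsub E V b a" by blast
  then have "(adj_in (remove_edge E a b) V)\<^sup>*\<^sup>* b z" "(adj_in (remove_edge E a b) V)\<^sup>*\<^sup>* a z"
    using walk_remove_edge_in_Tsub remove_edge_commute by metis+
  then have "(adj_in (remove_edge E a b) V)\<^sup>*\<^sup>* a b"
    using adj_in_rtranclp_sym[OF symp_remove_edge[OF symp_E]] rtranclp_trans by metis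
  then show False using edge_is_bridge[OF assms] by blast
qed

lemma Tsub_complement:
  assumes ab: "E a b"
  shows "V - Tsub E V a b = Tsub E V b a"
proof -
  have "a \<noteq> b" using ab edge_irrefl by blast
  have "z \<in> Tsub E V a b \<union> Tsub E V b a" if "z \<in> V" for z
    using connected[OF conjunct1[OF edge_in_V[OF ab]] that]
  proof (induction rule: rtranclp_induct)
    case base
    show ?case using Tsub_self by blast
  next
    case (step y z)
    then have "E y z" "y \<in> Tsub E V a b \<union> Tsub E V b a" by (auto simp: adj_in_def)
    then show ?case using Tsub_self Tsub_closed \<open>a \<noteq> b\<close> by (metis UnE UnI1 UnI2)
  qed
  moreover have "Tsub E V b a \<subseteq> V" using Tsub_subset[OF edge_sym[OF ab]] by blast
  ultimately show ?thesis using Tsub_disjoint[OF ab] by blast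
qed

lemma Tbar_eq_Tsub: "E a b \<Longrightarrow> Tbar E V a b = Tsub E V b a"
  unfolding Tbar_def by (rule Tsub_complement)

lemma comp_Tsub:
  assumes ab: "E a b" and bc: "E b c" and "c \<noteq> a"
  shows "comp E (Tsub E V a b - {b}) c = Tsub E V b c"
proof -
  have "a \<notin> Tsub E V b c" using neighbour_notin_Tsub edge_sym[OF ab] bc \<open>c \<noteq> a\<close> by blast
  then have "Tsub E V b c \<subseteq> V - {a} - {b}" using Tsub_subset[OF bc] by blast
  then have "Tsub E V b c = comp E (V - {a} - {b}) c"
    unfolding Tsub_def by (intro comp_restrict[symmetric]) auto
  also have "\<dots> \<subseteq> Tsub E V a c" unfolding Tsub_def by (intro comp_mono) auto
  also have "Tsub E V a c = Tsub E V a b"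
    using Tsub_closed[OF Tsub_self bc \<open>c \<noteq> a\<close>] edge_irrefl ab by (metis Tsub_eq_if_mem)
  finally have "Tsub E V b c \<subseteq> Tsub E V a b - {b}" using Tsub_subset[OF bc] by blast
  moreover have "Tsub E V a b - {b} \<subseteq> V - {b}" using Tsub_subset[OF ab] by blast
  ultimately show ?thesis unfolding Tsub_def by (rule comp_restrict)
qed

lemma neighbour_in_Tsub: "E p y \<Longrightarrow> E y v \<Longrightarrow> v \<noteq> p \<Longrightarrow> v \<in> Tsub E V p y"
  using Tsub_closed[OF Tsub_self] edge_irrefl by blast

lemma neighbours_in_Tsub:
  assumes "E p y"
  shows "{v \<in> Tsub E V p y. E y v} = {v \<in> V. E y v} - {p}"
  using Tsub_subset[OF assms] neighbour_in_Tsub[OF assms] edge_in_V by blast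

lemma is_path_in_Tsub:
  assumes "is_path E (p # c # ys) p q"
  shows "q \<in> Tsub E V p c"
proof -
  have path: "E p c" "p \<notin> set (c # ys)" "is_path E (c # ys) c q"
    using assms by (auto simp: is_path_Cons_Cons)
  then have "set (c # ys) \<subseteq> V - {p}"
    using is_path_set_subset[OF path(3)] edge_in_V by blast
  then show ?thesis
    using walk_of_path[OF path(3)] unfolding Tsub_def comp_def by simp
qed

lemma is_path_unique: "is_path E xs p q \<Longrightarrow> is_path E ys p q \<Longrightarrow> xs = ys"
proof (induction xs arbitrary: p ys rule: induct_list012)
  case 1
  then show ?case by (simp add: is_path_def)
next
  case (2 a)
  then show ?case using is_path_loop by (metis is_path_singleton)
next
  case (3 a c xs)
  have xs: "a = p" "E p c" "p \<notin> set (c # xs)" "is_path E (c # xs) c q"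
    using "3.prems"(1) by (auto simp: is_path_Cons_Cons)
  have "q \<in> set (c # xs)" using xs(4) unfolding is_path_def by (metis last_in_set)
  then have "q \<noteq> p" using xs(3) by blast
  then obtain c' ys' where ys: "ys = p # c' # ys'"
    using "3.prems"(2) by (cases ys rule: remdups_adj.cases) (auto simp: is_path_def)
  have c': "E p c'" "is_path E (c' # ys') c' q"
    using "3.prems"(2) unfolding ys by (auto simp: is_path_Cons_Cons)
  have "c' = c"
  proof (rule ccontr)
    assume "c' \<noteq> c"
    have "Tsub E V p c' = Tsub E V p c"
      using is_path_in_Tsub "3.prems"(1,2) xs(1) ys by (metis Tsub_eq_if_mem)
    then show False using neighbour_notin_Tsub[OF c'(1) xs(2) \<open>c' \<noteq> c\<close>] Tsub_self by metis
  qed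
  then show ?case using "3.IH"(2)[OF xs(4)] c'(2) xs(1) ys by simp
qed

lemma tpath_is_path:
  assumes "a \<in> V" "b \<in> V"
  shows "is_path E (tpath E a b) a b"
proof -
  have "\<exists>!xs. is_path E xs a b" using path_of_walk[OF connected[OF assms]] is_path_unique by blast
  then show ?thesis unfolding tpath_def by (rule theI')
qed

end

section \<open>Broadcasting towards a prime center\<close>

locale prime_center_tree = tree_graph +
  fixes w :: "'a \<Rightarrow> 'a \<Rightarrow> real" and \<rho> :: real and \<kappa> :: 'a
  assumes w_nonneg: "E a b \<Longrightarrow> w a b \<ge> 0"
    and w_sym: "E a b \<Longrightarrow> w a b = w b a"
    and rho_nonneg: "\<rho> \<ge> 0"
    and prime: "prime_center E w \<rho> V \<kappa>"
begin

lemma center_in_V: "\<kappa> \<in> V"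
  using prime by (simp add: prime_center_def bcenters_def)

lemma prime_center_Tsub: "E \<kappa> u \<Longrightarrow> bcast E w \<rho> u (Tsub E V \<kappa> u) \<le> bcast E w \<rho> \<kappa> (Tsub E V u \<kappa>)"
  using prime edge_sym by (auto simp: prime_center_def Tbar_eq_Tsub)

definition branch_time :: "'a \<Rightarrow> 'a \<Rightarrow> real" where
  "branch_time y v = w y v + bcast E w \<rho> v (Tsub E V y v)"

text \<open>S is y together with complete branches of T at y; on such sets the recursion for
b(y, S) only involves the branches T_{y,v}.\<close>

definition branch_union :: "'a \<Rightarrow> 'a set \<Rightarrow> bool" where
  "branch_union y S \<longleftrightarrow> S \<subseteq> V \<and> y \<in> S \<and> (\<forall>v\<in>S. E y v \<longrightarrow> comp E (S - {y}) v = Tsub E V y v)"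

lemma branch_union_V: "y \<in> V \<Longrightarrow> branch_union y V"
  unfolding branch_union_def Tsub_def by auto

lemma branch_union_Tsub:
  assumes "E p y"
  shows "branch_union y (Tsub E V p y)"
  unfolding branch_union_def
proof (intro conjI ballI impI)
  show "Tsub E V p y \<subseteq> V" "y \<in> Tsub E V p y" using Tsub_subset[OF assms] Tsub_self by auto
  fix v assume "v \<in> Tsub E V p y" "E y v"
  moreover have "v \<noteq> p" using calculation(1) Tsub_subset[OF assms] by blast
  ultimately show "comp E (Tsub E V p y - {y}) v = Tsub E V y v" using comp_Tsub[OF assms] by blast
qed

lemma branch_union_finite: "branch_union y S \<Longrightarrow> finite S"
  unfolding branch_union_def using finite_V finite_subset by blast

lemma bcast_branch_union:
  assumes "branch_union y S"
  shows "bcast E w \<rho> y S = sched_time \<rho> {v\<in>S. E y v} (branch_time y)"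
proof -
  have "finite S" "y \<in> S" using assms branch_union_finite unfolding branch_union_def by auto
  then show ?thesis
    unfolding bcast_unfold[OF edge_irrefl \<open>finite S\<close> \<open>y \<in> S\<close>] using assms
    by (intro sched_time_cong) (simp add: branch_union_def branch_time_def)
qed

lemma branch_time_nonneg:
  assumes "E y v"
  shows "branch_time y v \<ge> 0"
proof -
  have "finite (Tsub E V y v)" using Tsub_subset[OF assms] finite_V finite_subset by blast
  then show ?thesis
    unfolding branch_time_def by (intro add_nonneg_nonneg w_nonneg[OF assms] bcast_nonneg[OF w_nonneg rho_nonneg])
qed

lemma bcast_ge_branch_time:
  assumes "branch_union y S" "v \<in> S" "E y v"
  shows "\<rho> + branch_time y v \<le> bcast E w \<rho> y S"
  unfolding bcast_branch_union[OF assms(1)] using assms branch_union_finite rho_nonneg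
  by (intro sched_time_ge) auto

lemma bcast_eq_branch_time:
  assumes S: "branch_union y S" and n: "n \<in> S" "E y n"
    and slowest: "bcast E w \<rho> y (Tsub E V n y) \<le> branch_time y n"
  shows "bcast E w \<rho> y S = \<rho> + branch_time y n"
proof -
  let ?N = "{v\<in>S. E y v}"
  have "sched_time \<rho> (?N - {n}) (branch_time y) \<le> sched_time \<rho> ({v\<in>V. E y v} - {n}) (branch_time y)"
    using S finite_V rho_nonneg branch_time_nonneg by (intro sched_time_mono) (auto simp: branch_union_def)
  also have "\<dots> = bcast E w \<rho> y (Tsub E V n y)"
    using bcast_branch_union[OF branch_union_Tsub] neighbours_in_Tsub edge_sym[OF n(2)] by simp
  finally have "sched_time \<rho> (?N - {n}) (branch_time y) \<le> branch_time y n" using slowest by linarith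
  then have "sched_time \<rho> (insert n (?N - {n})) (branch_time y) = \<rho> + branch_time y n"
    using branch_union_finite[OF S] rho_nonneg by (intro sched_time_insert_dominant) auto
  moreover have "insert n (?N - {n}) = ?N" using n by auto
  ultimately show ?thesis unfolding bcast_branch_union[OF S] by simp
qed

lemma bcast_le_branch_time_towards_center:
  "is_path E (y # n # ys) y \<kappa> \<Longrightarrow> bcast E w \<rho> y (Tsub E V n y) \<le> branch_time y n"
proof (induction ys arbitrary: y n)
  case Nil
  then have "n = \<kappa>" "E y \<kappa>" by (auto simp: is_path_Cons_Cons is_path_singleton)
  then show ?case
    using prime_center_Tsub[OF edge_sym[OF \<open>E y \<kappa>\<close>]] w_nonneg[OF \<open>E y \<kappa>\<close>]
    unfolding branch_time_def by simp
next
  case (Cons n' ys)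
  have yn: "E y n" "y \<notin> set (n # n' # ys)" and path: "is_path E (n # n' # ys) n \<kappa>"
    using Cons.prems by (auto simp: is_path_Cons_Cons)
  then have nn': "E n n'" "n \<notin> set (n' # ys)" by (auto simp: is_path_Cons_Cons)
  have "y \<noteq> n'" using yn(2) by simp
  have "\<rho> + branch_time n y \<le> bcast E w \<rho> n (Tsub E V n' n)"
    by (rule bcast_ge_branch_time[OF branch_union_Tsub[OF edge_sym[OF nn'(1)]]
          neighbour_in_Tsub[OF edge_sym[OF nn'(1)] edge_sym[OF yn(1)] \<open>y \<noteq> n'\<close>] edge_sym[OF yn(1)]])
  moreover have "\<rho> + branch_time n n' \<le> bcast E w \<rho> n (Tsub E V y n)"
    by (rule bcast_ge_branch_time[OF branch_union_Tsub[OF yn(1)]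
          neighbour_in_Tsub[OF yn(1) nn'(1) \<open>y \<noteq> n'\<close>[symmetric]] nn'(1)])
  moreover have "bcast E w \<rho> n (Tsub E V n' n) \<le> branch_time n n'"
    using Cons.IH[OF path] .
  ultimately show ?case
    using w_sym[OF yn(1)] w_nonneg[OF yn(1)] rho_nonneg unfolding branch_time_def by linarith
qed

lemma bcast_along_path:
  "is_path E (y # n # ys) y \<kappa> \<Longrightarrow> branch_union y S \<Longrightarrow> n \<in> S \<Longrightarrow>
     bcast E w \<rho> y S = real (Suc (length ys)) * \<rho> + list_weight w (y # n # ys)
       + bcast E w \<rho> \<kappa> (Tbar E V \<kappa> y)"
proof (induction ys arbitrary: y n S)
  case Nil
  then have "n = \<kappa>" "E y \<kappa>" by (auto simp: is_path_Cons_Cons is_path_singleton)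
  then show ?case
    using bcast_eq_branch_time[OF Nil.prems(2,3)] bcast_le_branch_time_towards_center[OF Nil.prems(1)]
      Tbar_eq_Tsub[OF edge_sym[OF \<open>E y \<kappa>\<close>]]
    by (simp add: branch_time_def list_weight_pair)
next
  case (Cons n' ys)
  have yn: "E y n" "y \<notin> set (n # n' # ys)" and path: "is_path E (n # n' # ys) n \<kappa>"
    using Cons.prems by (auto simp: is_path_Cons_Cons)
  then have nn': "E n n'" "n \<notin> set (n' # ys)" by (auto simp: is_path_Cons_Cons)
  have "\<kappa> \<in> set (n' # ys)" using path by (auto simp: is_path_Cons_Cons is_path_def)
  then have "y \<noteq> \<kappa>" "n \<noteq> \<kappa>" using yn(2) nn'(2) by auto
  then have "Tbar E V \<kappa> n = Tbar E V \<kappa> y"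
    unfolding Tbar_def using Tsub_eq_if_mem[OF Tsub_closed[OF Tsub_self yn(1)]] by simp
  moreover have "bcast E w \<rho> y S = \<rho> + w y n + bcast E w \<rho> n (Tsub E V y n)"
    using bcast_eq_branch_time[OF Cons.prems(2,3) yn(1) bcast_le_branch_time_towards_center[OF Cons.prems(1)]]
    by (simp add: branch_time_def)
  moreover have "n' \<in> Tsub E V y n" using yn nn' by (intro neighbour_in_Tsub) auto
  ultimately show ?case
    using Cons.IH[OF path branch_union_Tsub[OF yn(1)]] by (simp add: list_weight_Cons_Cons algebra_simps)
qed

end

theorem lemma4:
  fixes E :: "'a \<Rightarrow> 'a \<Rightarrow> bool" and V :: "'a set"
    and wlo whi w :: "'a \<Rightarrow> 'a \<Rightarrow> real" and \<rho> :: real and k x :: 'a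
  assumes tree: "is_tree E V"
    and intervals: "\<forall>a b. E a b \<longrightarrow> 0 \<le> wlo a b \<and> wlo a b \<le> whi a b
                        \<and> wlo a b = wlo b a \<and> whi a b = whi b a"
    and rho: "\<rho> > 0"
    and scen: "scenario E wlo whi w"
    and prime: "prime_center E w \<rho> V k"
    and x: "x \<in> V" "x \<noteq> k"
  shows "bcast E w \<rho> x V
           = real (tdist E x k) * \<rho> + pweight E w x k + bcast E w \<rho> k (Tbar E V k x)"
proof -
  interpret prime_center_tree E V w \<rho> k
  proof
    show "is_tree E V" by (rule tree)
    show "E a b \<Longrightarrow> 0 \<le> w a b" for a b using intervals scen unfolding scenario_def by force
    show "E a b \<Longrightarrow> w a b = w b a" for a b using scen unfolding scenario_def by blast
    show "0 \<le> \<rho>" using rho by simp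
    show "prime_center E w \<rho> V k" by (rule prime)
  qed
  have path: "is_path E (tpath E x k) x k" using tpath_is_path[OF x(1) center_in_V] .
  then obtain n ys where xs: "tpath E x k = x # n # ys"
    using x(2) by (cases "tpath E x k" rule: remdups_adj.cases) (auto simp: is_path_def)
  then have "n \<in> V" using path edge_in_V by (auto simp: is_path_Cons_Cons)
  then have "bcast E w \<rho> x V = real (Suc (length ys)) * \<rho> + list_weight w (x # n # ys)
      + bcast E w \<rho> k (Tbar E V k x)"
    using bcast_along_path[OF path[unfolded xs] branch_union_V[OF x(1)]] by blast
  then show ?thesis by (simp add: tdist_def pweight_eq_list_weight xs)
qed

end
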